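(* Let $G$ be a simple graph having two edges with no common end. Then $(\lambda-1)^2$ divides $P(\mathcal{H}_{\bullet G},\lambda)$.
   Context: A hypergraph $\mathcal{H}=(\mathcal{V},\mathcal{E})$ consists of a finite vertex set $\mathcal{V}$ and a set $\mathcal{E}$ of subsets of $\mathcal{V}$, each of size at least $1$, called edges. For a positive integer $\lambda$, a weak proper $\lambda$-colouring of $\mathcal{H}$ is a map $\phi:\mathcal{V}\to\{1,\dots,\lambda\}$ such that $|\{\phi(v):v\in e\}|>1$ for every $e\in\mathcal{E}$. $P(\mathcal{H},\lambda)$ denotes the number of weak proper $\lambda$-colourings; it is a polynomial in $\lambda$. For a simple graph $G=(V,E)$, $\mathcal{H}_{\bullet G}$ is the hypergraph with vertex set $V\cup\{w\}$, $w\notin V$ a new vertex, and edge set $\{\{u,v,w\}:uv\in E\}$. *)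

theory Defs
  imports "HOL-Library.FuncSet" "HOL-Computational_Algebra.Polynomial"
begin

definition weak_proper_colourings :: "'a set \<Rightarrow> 'a set set \<Rightarrow> nat \<Rightarrow> ('a \<Rightarrow> nat) set" where
  "weak_proper_colourings VV EE lam =
     {\<phi> \<in> VV \<rightarrow>\<^sub>E {1..lam}. \<forall>e\<in>EE. card (\<phi> ` e) > 1}"

definition num_weak_colourings :: "'a set \<Rightarrow> 'a set set \<Rightarrow> nat \<Rightarrow> nat" where
  "num_weak_colourings VV EE lam = card (weak_proper_colourings VV EE lam)"

definition hyp_chrom_poly :: "'a set \<Rightarrow> 'a set set \<Rightarrow> int poly" where
  "hyp_chrom_poly VV EE =
     (THE p. \<forall>lam::nat. lam \<ge> 1 \<longrightarrow> poly p (int lam) = int (num_weak_colourings VV EE lam))"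

definition simple_graph :: "'a set \<Rightarrow> 'a set set \<Rightarrow> bool" where
  "simple_graph V E \<longleftrightarrow> finite V \<and> (\<forall>e\<in>E. e \<subseteq> V \<and> card e = 2)"

text \<open>The cone hypergraph H_{\<bullet>G}: new vertex w = None, vertices Some v for v in V,
  edges {u, v, w} for each edge uv of G.\<close>

definition cone_vertices :: "'a set \<Rightarrow> 'a option set" where
  "cone_vertices V = insert None (Some ` V)"

definition cone_edges :: "'a set set \<Rightarrow> 'a option set set" where
  "cone_edges E = (\<lambda>e. insert None (Some ` e)) ` E"

end

theory Submission
  imports Defs
begin

text \<open>Classify a colouring of the cone by the colour c of the apex and the set S of vertices of G
  sharing that colour. The colouring is weakly proper exactly when S contains no edge of G,
  and the vertices outside S may take any of the other \<open>\<lambda> - 1\<close> colours, so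
  \<open>P(H\<^sub>\<bullet>\<^sub>G, \<lambda>) = \<lambda> \<Sum>\<^sub>S (\<lambda> - 1)\<^bsup>|V - S|\<^esup>\<close> over the independent sets S of G.
  If G has two disjoint edges, every independent set misses a vertex of each, so every
  exponent is at least 2.\<close>

definition independent_sets :: "'a set \<Rightarrow> 'a set set \<Rightarrow> 'a set set" where
  "independent_sets V E = {S. S \<subseteq> V \<and> (\<forall>e\<in>E. \<not> e \<subseteq> S)}"

lemma finite_independent_sets: "finite V \<Longrightarrow> finite (independent_sets V E)"
  by (rule finite_subset[of _ "Pow V"]) (auto simp: independent_sets_def)

definition apex_colourings :: "'a set \<Rightarrow> nat \<Rightarrow> nat \<Rightarrow> 'a set \<Rightarrow> ('a option \<Rightarrow> nat) set" where
  "apex_colourings V lam c S = PiE (cone_vertices V)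
     (\<lambda>y. case y of None \<Rightarrow> {c} | Some x \<Rightarrow> if x \<in> S then {c} else {1..lam} - {c})"

lemma mem_apex_colourings:
  "\<phi> \<in> apex_colourings V lam c S \<longleftrightarrow> \<phi> \<in> extensional (cone_vertices V) \<and> \<phi> None = c \<and>
     (\<forall>x\<in>V \<inter> S. \<phi> (Some x) = c) \<and> (\<forall>x\<in>V - S. \<phi> (Some x) \<in> {1..lam} - {c})"
  by (auto simp: apex_colourings_def PiE_iff cone_vertices_def)

lemma apex_colourings_subset_PiE:
  "c \<in> {1..lam} \<Longrightarrow> apex_colourings V lam c S \<subseteq> cone_vertices V \<rightarrow>\<^sub>E {1..lam}"
  unfolding apex_colourings_def by (rule PiE_mono) (auto split: option.split)

lemma apex_colourings_class:
  assumes "\<phi> \<in> apex_colourings V lam c S" and "S \<subseteq> V"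
  shows "S = {x\<in>V. \<phi> (Some x) = c}"
  using assms by (auto simp: mem_apex_colourings)

lemma apex_colourings_disjoint:
  assumes "S \<subseteq> V" "S' \<subseteq> V" "(c, S) \<noteq> (c', S')"
  shows "apex_colourings V lam c S \<inter> apex_colourings V lam c' S' = {}"
proof (intro equals0I)
  fix \<phi> assume \<phi>: "\<phi> \<in> apex_colourings V lam c S \<inter> apex_colourings V lam c' S'"
  then have "c = c'" by (simp add: mem_apex_colourings)
  moreover have "S = S'"
    using \<phi> apex_colourings_class[of \<phi> V lam] assms(1,2) \<open>c = c'\<close> by blast
  ultimately show False using assms(3) by simp
qed

lemma card_apex_colourings:
  assumes "finite V" "S \<subseteq> V" "c \<in> {1..lam}"
  shows "card (apex_colourings V lam c S) = (lam - 1) ^ card (V - S)"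
proof -
  define B where "B y = (case y of None \<Rightarrow> {c} | Some x \<Rightarrow> if x \<in> S then {c} else {1..lam} - {c})"
    for y
  have "card (apex_colourings V lam c S) = (\<Prod>y\<in>cone_vertices V. card (B y))"
    unfolding apex_colourings_def B_def[symmetric]
    using assms(1) by (simp add: card_PiE cone_vertices_def)
  also have "\<dots> = (\<Prod>x\<in>V. card (B (Some x)))"
    using assms(1) by (simp add: cone_vertices_def prod.reindex B_def)
  also have "\<dots> = (\<Prod>x\<in>V. if x \<in> S then 1 else lam - 1)"
    using assms(3) by (intro prod.cong) (auto simp: B_def card_Diff_singleton)
  also have "\<dots> = (lam - 1) ^ card (V - S)"
    using assms(1) by (simp add: prod.If_cases Diff_eq)
  finally show ?thesis .
qed

lemma cone_colourings_eq_Union_apex_colourings: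
  assumes "finite V" and edges: "\<forall>e\<in>E. e \<subseteq> V"
  shows "weak_proper_colourings (cone_vertices V) (cone_edges E) lam
       = (\<Union>(c, S)\<in>{1..lam} \<times> independent_sets V E. apex_colourings V lam c S)"
proof (intro equalityI subsetI)
  fix \<phi> assume "\<phi> \<in> weak_proper_colourings (cone_vertices V) (cone_edges E) lam"
  then have \<phi>: "\<phi> \<in> cone_vertices V \<rightarrow>\<^sub>E {1..lam}"
    and proper: "\<And>e. e \<in> E \<Longrightarrow> card (\<phi> ` insert None (Some ` e)) > 1"
    by (auto simp: weak_proper_colourings_def cone_edges_def)
  define c where "c = \<phi> None"
  define S where "S = {x\<in>V. \<phi> (Some x) = c}"
  have "\<not> e \<subseteq> S" if "e \<in> E" for e
  proof
    assume "e \<subseteq> S"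
    then have "\<phi> ` insert None (Some ` e) \<subseteq> {c}" by (auto simp: S_def c_def)
    then have "card (\<phi> ` insert None (Some ` e)) \<le> 1"
      using card_mono[of "{c}"] by fastforce
    with proper[OF that] show False by simp
  qed
  then have "S \<in> independent_sets V E" by (auto simp: independent_sets_def S_def)
  moreover have "c \<in> {1..lam}" using \<phi> by (auto simp: c_def cone_vertices_def)
  moreover have "\<phi> \<in> apex_colourings V lam c S"
  proof -
    have "\<phi> \<in> extensional (cone_vertices V)" using \<phi> by (simp add: PiE_iff)
    moreover have "\<phi> (Some x) \<in> {1..lam}" if "x \<in> V" for x
      using PiE_mem[OF \<phi>] that by (simp add: cone_vertices_def)
    ultimately show ?thesis by (auto simp: mem_apex_colourings S_def c_def)
  qed
  ultimately show "\<phi> \<in> (\<Union>(c, S)\<in>{1..lam} \<times> independent_sets V E. apex_colourings V lam c S)"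
    by blast
next
  fix \<phi> assume "\<phi> \<in> (\<Union>(c, S)\<in>{1..lam} \<times> independent_sets V E. apex_colourings V lam c S)"
  then obtain c S where c: "c \<in> {1..lam}" and S: "S \<in> independent_sets V E"
    and \<phi>: "\<phi> \<in> apex_colourings V lam c S" by auto
  have "\<phi> \<in> cone_vertices V \<rightarrow>\<^sub>E {1..lam}"
    using \<phi> apex_colourings_subset_PiE[OF c] by blast
  moreover have "card (\<phi> ` insert None (Some ` e)) > 1" if e: "e \<in> E" for e
  proof -
    obtain x where x: "x \<in> e" "x \<notin> S" using S e by (auto simp: independent_sets_def)
    have "x \<in> V" using x edges e by blast
    with \<phi> x have "\<phi> (Some x) \<noteq> \<phi> None" by (simp add: mem_apex_colourings)
    moreover have "finite e" using assms(1) edges e finite_subset by blast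
    ultimately have "card {\<phi> None, \<phi> (Some x)} \<le> card (\<phi> ` insert None (Some ` e))"
      using x by (intro card_mono) auto
    with \<open>\<phi> (Some x) \<noteq> \<phi> None\<close> show ?thesis by simp
  qed
  ultimately show "\<phi> \<in> weak_proper_colourings (cone_vertices V) (cone_edges E) lam"
    by (auto simp: weak_proper_colourings_def cone_edges_def)
qed

lemma num_weak_colourings_cone:
  assumes "finite V" and "\<forall>e\<in>E. e \<subseteq> V"
  shows "num_weak_colourings (cone_vertices V) (cone_edges E) lam
       = lam * (\<Sum>S\<in>independent_sets V E. (lam - 1) ^ card (V - S))"
proof -
  let ?I = "{1..lam} \<times> independent_sets V E"
  have "num_weak_colourings (cone_vertices V) (cone_edges E) lam
      = card (\<Union>(c, S)\<in>?I. apex_colourings V lam c S)"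
    unfolding num_weak_colourings_def cone_colourings_eq_Union_apex_colourings[OF assms] ..
  also have "\<dots> = (\<Sum>p\<in>?I. card (case p of (c, S) \<Rightarrow> apex_colourings V lam c S))"
  proof (rule card_UN_disjoint)
    show "finite ?I" using finite_independent_sets[OF assms(1)] by simp
    show "\<forall>p\<in>?I. finite (case p of (c, S) \<Rightarrow> apex_colourings V lam c S)"
      using assms(1) by (auto simp: apex_colourings_def cone_vertices_def intro!: finite_PiE)
    show "\<forall>p\<in>?I. \<forall>q\<in>?I. p \<noteq> q \<longrightarrow>
        (case p of (c, S) \<Rightarrow> apex_colourings V lam c S) \<inter>
        (case q of (c, S) \<Rightarrow> apex_colourings V lam c S) = {}"
    proof (intro ballI impI)
      fix p q assume "p \<in> ?I" "q \<in> ?I" "p \<noteq> q"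
      then show "(case p of (c, S) \<Rightarrow> apex_colourings V lam c S) \<inter>
          (case q of (c, S) \<Rightarrow> apex_colourings V lam c S) = {}"
        by (cases p; cases q) (simp add: independent_sets_def apex_colourings_disjoint)
    qed
  qed
  also have "\<dots> = (\<Sum>(c, S)\<in>?I. (lam - 1) ^ card (V - S))"
    using assms(1) by (intro sum.cong) (auto simp: independent_sets_def card_apex_colourings)
  also have "\<dots> = lam * (\<Sum>S\<in>independent_sets V E. (lam - 1) ^ card (V - S))"
    by (simp add: sum.cartesian_product[symmetric])
  finally show ?thesis .
qed

lemma int_poly_eqI_pos_nat:
  fixes p q :: "int poly"
  assumes "\<And>n::nat. n \<ge> 1 \<Longrightarrow> poly p (int n) = poly q (int n)"
  shows "p = q"
proof (rule ccontr)
  assume "p \<noteq> q"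
  then have "finite {x. poly (p - q) x = 0}" by (intro poly_roots_finite) simp
  moreover have "int ` {1..} \<subseteq> {x. poly (p - q) x = 0}" using assms by auto
  ultimately have "finite (int ` {1::nat..})" by (rule finite_subset[rotated])
  then have "finite {1::nat..}" by (rule finite_imageD) simp
  then show False using infinite_Ici by blast
qed

lemma hyp_chrom_polyI:
  assumes "\<And>n::nat. n \<ge> 1 \<Longrightarrow> poly p (int n) = int (num_weak_colourings VV EE n)"
  shows "hyp_chrom_poly VV EE = p"
  unfolding hyp_chrom_poly_def
proof (rule the_equality)
  show "\<forall>n::nat. n \<ge> 1 \<longrightarrow> poly p (int n) = int (num_weak_colourings VV EE n)"
    using assms by blast
  fix q assume "\<forall>n::nat. n \<ge> 1 \<longrightarrow> poly q (int n) = int (num_weak_colourings VV EE n)"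
  with assms show "q = p" by (intro int_poly_eqI_pos_nat) simp
qed

lemma hyp_chrom_poly_cone:
  assumes "finite V" and "\<forall>e\<in>E. e \<subseteq> V"
  shows "hyp_chrom_poly (cone_vertices V) (cone_edges E)
       = [:0, 1:] * (\<Sum>S\<in>independent_sets V E. [:-1, 1:] ^ card (V - S))"
proof (rule hyp_chrom_polyI)
  fix n :: nat assume "n \<ge> 1"
  then show "poly ([:0, 1:] * (\<Sum>S\<in>independent_sets V E. [:-1, 1:] ^ card (V - S))) (int n)
      = int (num_weak_colourings (cone_vertices V) (cone_edges E) n)"
    by (simp add: num_weak_colourings_cone[OF assms] poly_sum of_nat_diff)
qed

lemma two_le_card_Diff_independent:
  assumes "finite V" "S \<in> independent_sets V E"
    and "e1 \<in> E" "e2 \<in> E" "e1 \<inter> e2 = {}" "e1 \<subseteq> V" "e2 \<subseteq> V"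
  shows "2 \<le> card (V - S)"
proof -
  obtain x1 where x1: "x1 \<in> e1 - S" using assms(2,3) by (auto simp: independent_sets_def)
  obtain x2 where x2: "x2 \<in> e2 - S" using assms(2,4) by (auto simp: independent_sets_def)
  have "x1 \<noteq> x2" using x1 x2 assms(5) by blast
  with x1 x2 assms(6,7) have "{x1, x2} \<subseteq> V - S" "card {x1, x2} = 2" by auto
  then show ?thesis using assms(1) by (metis card_mono finite_Diff)
qed

theorem mainTheorem18:
  fixes V :: "'a set" and E :: "'a set set"
  assumes "simple_graph V E"
    and "\<exists>e1\<in>E. \<exists>e2\<in>E. e1 \<inter> e2 = {}"
  shows "[:-1, 1:] ^ 2 dvd hyp_chrom_poly (cone_vertices V) (cone_edges E)"
proof -
  have V: "finite V" and edges: "\<forall>e\<in>E. e \<subseteq> V"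
    using assms(1) by (auto simp: simple_graph_def)
  obtain e1 e2 where e: "e1 \<in> E" "e2 \<in> E" "e1 \<inter> e2 = {}" using assms(2) by blast
  have "[:-1, 1:] ^ 2 dvd ([:-1, 1:] ^ card (V - S) :: int poly)"
    if "S \<in> independent_sets V E" for S
    using two_le_card_Diff_independent[OF V that e] edges e by (simp add: le_imp_power_dvd)
  then have "[:-1, 1:] ^ 2 dvd (\<Sum>S\<in>independent_sets V E. [:-1, 1:] ^ card (V - S) :: int poly)"
    by (rule dvd_sum)
  then show ?thesis
    unfolding hyp_chrom_poly_cone[OF V edges] by (rule dvd_mult)
qed

end
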